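(* Let $v$ be a vertex of a graph $G$ and let $H$ be a subgraph of $G$ containing $v$ and containing at least one vertex from each connected component of $G-v$. Then any $k$ level-disjoint partitions of $H$ rooted in $v$ can be extended to $k$ level-disjoint partitions of $G$ rooted in $v$ (i.e., there exist $k$ $v$-rooted level-disjoint partitions of $G$ whose restrictions to $V(H)$ are the given ones, levelwise).
   Context: All graphs are simple and undirected; $G$ is connected. For $S\subseteq V(G)$, $N(S)$ denotes the set of vertices adjacent to some vertex of $S$. A level partition of a graph $G$ is a tuple $\mathcal{S}=(S_0,\dots,S_h)$ of pairwise disjoint sets (levels) with union $V(G)$ such that $S_i\subseteq N(S_{i-1})$ for every $1\le i\le h$ (neighborhoods taken in that graph); $h=h(\mathcal{S})$ is its height. It is rooted in $v$ if $S_0=\{v\}$. Two level partitions $\mathcal{S},\mathcal{T}$ are level-disjoint if $S_i\cap T_i=\emptyset$ for every $1\le i\le\min(h(\mathcal{S}),h(\mathcal{T}))$; $k$ level partitions are level-disjoint partitions if they are pairwise level-disjoint. $G-v$ denotes $G$ with $v$ and its incident edges removed. *)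

theory Defs
  imports Main
begin

definition graph :: "'a set \<Rightarrow> ('a \<Rightarrow> 'a \<Rightarrow> bool) \<Rightarrow> bool" where
  "graph V E \<longleftrightarrow> finite V \<and> (\<forall>x y. E x y \<longrightarrow> x \<in> V \<and> y \<in> V \<and> x \<noteq> y \<and> E y x)"

definition connected_graph :: "'a set \<Rightarrow> ('a \<Rightarrow> 'a \<Rightarrow> bool) \<Rightarrow> bool" where
  "connected_graph V E \<longleftrightarrow> (\<forall>x\<in>V. \<forall>y\<in>V. E\<^sup>*\<^sup>* x y)"

definition subgraph :: "'a set \<Rightarrow> ('a \<Rightarrow> 'a \<Rightarrow> bool) \<Rightarrow> 'a set \<Rightarrow> ('a \<Rightarrow> 'a \<Rightarrow> bool) \<Rightarrow> bool" where
  "subgraph VH EH V E \<longleftrightarrow> graph VH EH \<and> VH \<subseteq> V \<and> (\<forall>x y. EH x y \<longrightarrow> E x y)"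

text \<open>G - v: delete v and its incident edges.\<close>
definition del_edges :: "('a \<Rightarrow> 'a \<Rightarrow> bool) \<Rightarrow> 'a \<Rightarrow> 'a \<Rightarrow> 'a \<Rightarrow> bool" where
  "del_edges E v = (\<lambda>x y. E x y \<and> x \<noteq> v \<and> y \<noteq> v)"

definition nbhd :: "('a \<Rightarrow> 'a \<Rightarrow> bool) \<Rightarrow> 'a set \<Rightarrow> 'a set" where
  "nbhd E S = {u. \<exists>w\<in>S. E w u}"

definition level_partition :: "'a set \<Rightarrow> ('a \<Rightarrow> 'a \<Rightarrow> bool) \<Rightarrow> 'a set list \<Rightarrow> bool" where
  "level_partition V E S \<longleftrightarrow> S \<noteq> [] \<and> \<Union>(set S) = V
     \<and> (\<forall>i<length S. \<forall>j<length S. i \<noteq> j \<longrightarrow> S!i \<inter> S!j = {})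
     \<and> (\<forall>i. 1 \<le> i \<and> i < length S \<longrightarrow> S!i \<subseteq> nbhd E (S!(i-1)))"

definition height :: "'a set list \<Rightarrow> nat" where
  "height S = length S - 1"

definition rooted :: "'a set list \<Rightarrow> 'a \<Rightarrow> bool" where
  "rooted S v \<longleftrightarrow> S \<noteq> [] \<and> S!0 = {v}"

definition level_disjoint :: "'a set list \<Rightarrow> 'a set list \<Rightarrow> bool" where
  "level_disjoint S T \<longleftrightarrow> (\<forall>i. 1 \<le> i \<and> i \<le> min (height S) (height T) \<longrightarrow> S!i \<inter> T!i = {})"

definition lev :: "'a set list \<Rightarrow> nat \<Rightarrow> 'a set" where
  "lev S i = (if i < length S then S!i else {})"

definition restricts_to :: "'a set list \<Rightarrow> 'a set \<Rightarrow> 'a set list \<Rightarrow> bool" where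
  "restricts_to T W S \<longleftrightarrow> (\<forall>i. lev T i \<inter> W = lev S i)"

end

theory Submission imports Defs begin

text \<open>The partitions of G are built by adding the vertices outside H one at a time. A vertex u
  outside the current vertex set W with a neighbour w \<noteq> v in W is put, in every partition, on the
  level just below the level of w. As the partitions are rooted in v and level-disjoint, w lies
  on pairwise different levels of them, hence so does u and level-disjointness survives. Such a
  pair u, w exists as long as W \<noteq> V, because every vertex of G - v reaches H within G - v.\<close>

lemma Union_set_eq_UN_lev: "\<Union>(set S) = (\<Union>n. lev S n)"
  by (auto simp: lev_def in_set_conv_nth split: if_splits) (metis nth_mem)

lemma level_partition_iff_lev:
  "level_partition V E S \<longleftrightarrow> S \<noteq> [] \<and> (\<Union>n. lev S n) = V
     \<and> (\<forall>a b. a \<noteq> b \<longrightarrow> lev S a \<inter> lev S b = {})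
     \<and> (\<forall>n. 1 \<le> n \<longrightarrow> lev S n \<subseteq> nbhd E (lev S (n - 1)))"
proof -
  have "(\<forall>i<length S. \<forall>j<length S. i \<noteq> j \<longrightarrow> S!i \<inter> S!j = {}) \<longleftrightarrow>
        (\<forall>a b. a \<noteq> b \<longrightarrow> lev S a \<inter> lev S b = {})"
    and "(\<forall>i. 1 \<le> i \<and> i < length S \<longrightarrow> S!i \<subseteq> nbhd E (S!(i-1))) \<longleftrightarrow>
        (\<forall>n. 1 \<le> n \<longrightarrow> lev S n \<subseteq> nbhd E (lev S (n - 1)))"
    by (auto simp: lev_def)
  then show ?thesis
    unfolding level_partition_def Union_set_eq_UN_lev by simp
qed

lemma level_disjoint_iff_lev:
  "level_disjoint S T \<longleftrightarrow> (\<forall>i\<ge>1. lev S i \<inter> lev T i = {})"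
  unfolding level_disjoint_def height_def lev_def
  by (intro iff_allI) (auto simp: Suc_le_eq)

lemma lev_nonempty_imp_less_length: "x \<in> lev S n \<Longrightarrow> n < length S"
  by (auto simp: lev_def split: if_splits)

lemma level_partition_lev_subset: "level_partition V E S \<Longrightarrow> lev S n \<subseteq> V"
  unfolding level_partition_iff_lev by blast

lemma level_partition_ex_lev: "level_partition V E S \<Longrightarrow> x \<in> V \<Longrightarrow> \<exists>n. x \<in> lev S n"
  unfolding level_partition_iff_lev by blast

lemma rooted_iff_lev: "rooted S v \<longleftrightarrow> S \<noteq> [] \<and> lev S 0 = {v}"
  by (auto simp: rooted_def lev_def)

lemma nbhd_mono: "A \<subseteq> B \<Longrightarrow> nbhd E A \<subseteq> nbhd E B"
  by (auto simp: nbhd_def)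

lemma level_partition_mono_edges:
  assumes "level_partition V E S" "\<And>x y. E x y \<Longrightarrow> E' x y"
  shows "level_partition V E' S"
proof -
  have "nbhd E A \<subseteq> nbhd E' A" for A
    using assms(2) by (auto simp: nbhd_def)
  then show ?thesis
    using assms(1) unfolding level_partition_iff_lev by (meson order.trans)
qed

lemma restricts_to_self: "level_partition V E S \<Longrightarrow> restricts_to S V S"
  unfolding level_partition_iff_lev restricts_to_def by auto

definition add_to_level :: "'a set list \<Rightarrow> nat \<Rightarrow> 'a \<Rightarrow> 'a set list" where
  "add_to_level S m u = (if m < length S then S[m := S!m \<union> {u}] else S @ [{u}])"

lemma add_to_level_nonempty: "add_to_level S m u \<noteq> []"
  by (auto simp: add_to_level_def)

text \<open>For m > length S the vertex lands on level length S rather than m, hence the hypothesis.\<close>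

lemma lev_add_to_level:
  "m \<le> length S \<Longrightarrow> lev (add_to_level S m u) n = lev S n \<union> (if n = m then {u} else {})"
  by (auto simp: add_to_level_def lev_def nth_append nth_list_update)

lemma lev_add_to_level_below:
  "w \<in> lev S i \<Longrightarrow>
    lev (add_to_level S (Suc i) u) n = lev S n \<union> (if n = Suc i then {u} else {})"
  using lev_nonempty_imp_less_length by (intro lev_add_to_level) (simp add: Suc_le_eq)

lemma level_partition_add_below:
  assumes "level_partition W E S" "w \<in> lev S i" "E w u" "u \<notin> W"
  shows "level_partition (insert u W) E (add_to_level S (Suc i) u)"
  unfolding level_partition_iff_lev
proof (intro conjI allI impI)
  note S = assms(1)[unfolded level_partition_iff_lev]
  note lev_add = lev_add_to_level_below[OF assms(2)]
  show "add_to_level S (Suc i) u \<noteq> []" by (rule add_to_level_nonempty)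
  show "(\<Union>n. lev (add_to_level S (Suc i) u) n) = insert u W"
    using S by (auto simp: lev_add split: if_splits)
  show "lev (add_to_level S (Suc i) u) a \<inter> lev (add_to_level S (Suc i) u) b = {}"
    if "a \<noteq> b" for a b
    using that S assms(4) by (auto simp: lev_add)
  fix n :: nat assume "1 \<le> n"
  have "lev S (n - 1) \<subseteq> lev (add_to_level S (Suc i) u) (n - 1)"
    by (simp add: lev_add)
  then have "lev S n \<subseteq> nbhd E (lev (add_to_level S (Suc i) u) (n - 1))"
    using S \<open>1 \<le> n\<close> nbhd_mono by blast
  moreover have "n = Suc i \<Longrightarrow> u \<in> nbhd E (lev (add_to_level S (Suc i) u) (n - 1))"
    using assms(2,3) by (auto simp: nbhd_def lev_add)
  ultimately show "lev (add_to_level S (Suc i) u) n \<subseteq> nbhd E (lev (add_to_level S (Suc i) u) (n - 1))"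
    by (auto simp: lev_add)
qed

lemma rooted_add_below: "rooted S v \<Longrightarrow> w \<in> lev S i \<Longrightarrow> rooted (add_to_level S (Suc i) u) v"
  by (simp add: rooted_iff_lev lev_add_to_level_below add_to_level_nonempty)

lemma restricts_to_add_below:
  "restricts_to S VH P \<Longrightarrow> w \<in> lev S i \<Longrightarrow> u \<notin> VH \<Longrightarrow>
    restricts_to (add_to_level S (Suc i) u) VH P"
  by (auto simp: restricts_to_def lev_add_to_level_below)

lemma level_disjoint_add_below:
  assumes "level_disjoint S T" "w \<in> lev S i" "w \<in> lev T i'" "i \<noteq> i'"
    and "\<forall>n. u \<notin> lev S n" "\<forall>n. u \<notin> lev T n"
  shows "level_disjoint (add_to_level S (Suc i) u) (add_to_level T (Suc i') u)"
  using assms(1,4-)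
  unfolding level_disjoint_iff_lev lev_add_to_level_below[OF assms(2)] lev_add_to_level_below[OF assms(3)]
  by auto

definition level_extensions ::
  "nat \<Rightarrow> ('a \<Rightarrow> 'a \<Rightarrow> bool) \<Rightarrow> 'a set \<Rightarrow> (nat \<Rightarrow> 'a set list) \<Rightarrow> 'a \<Rightarrow> 'a set \<Rightarrow>
    (nat \<Rightarrow> 'a set list) \<Rightarrow> bool" where
  "level_extensions k E VH P v W Q \<longleftrightarrow>
     (\<forall>j<k. level_partition W E (Q j) \<and> rooted (Q j) v \<and> restricts_to (Q j) VH (P j))
   \<and> (\<forall>j<k. \<forall>j'<k. j \<noteq> j' \<longrightarrow> level_disjoint (Q j) (Q j'))"

lemma level_extensions_insert:
  assumes Q: "level_extensions k E VH P v W Q"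
    and "VH \<subseteq> W" "w \<in> W" "w \<noteq> v" "E w u" "u \<notin> W"
  shows "\<exists>Q'. level_extensions k E VH P v (insert u W) Q'"
proof -
  have lp: "\<And>j. j < k \<Longrightarrow> level_partition W E (Q j)"
    and rt: "\<And>j. j < k \<Longrightarrow> rooted (Q j) v"
    and rs: "\<And>j. j < k \<Longrightarrow> restricts_to (Q j) VH (P j)"
    and ld: "\<And>j j'. j < k \<Longrightarrow> j' < k \<Longrightarrow> j \<noteq> j' \<Longrightarrow> level_disjoint (Q j) (Q j')"
    using Q by (auto simp: level_extensions_def)
  define lv where "lv j = (SOME i. w \<in> lev (Q j) i)" for j
  have lv: "w \<in> lev (Q j) (lv j)" if "j < k" for j
  proof -
    have "\<exists>i. w \<in> lev (Q j) i"
      using level_partition_ex_lev[OF lp[OF that] \<open>w \<in> W\<close>] .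
    then show ?thesis
      unfolding lv_def by (rule someI_ex)
  qed
  have lv_pos: "1 \<le> lv j" if "j < k" for j
  proof (rule ccontr)
    assume "\<not> 1 \<le> lv j"
    then have "lv j = 0" by simp
    then show False
      using lv[OF that] rt[OF that] \<open>w \<noteq> v\<close> by (simp add: rooted_iff_lev)
  qed
  have lv_inj: "lv j \<noteq> lv j'" if "j < k" "j' < k" "j \<noteq> j'" for j j'
  proof
    assume "lv j = lv j'"
    then have "w \<in> lev (Q j) (lv j) \<inter> lev (Q j') (lv j)"
      using lv[OF that(1)] lv[OF that(2)] by simp
    moreover have "lev (Q j) (lv j) \<inter> lev (Q j') (lv j) = {}"
      using ld[OF that] lv_pos[OF that(1)] unfolding level_disjoint_iff_lev by blast
    ultimately show False by simp
  qed
  have u_new: "\<forall>n. u \<notin> lev (Q j) n" if "j < k" for j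
    using level_partition_lev_subset[OF lp[OF that]] \<open>u \<notin> W\<close> by blast
  have "level_extensions k E VH P v (insert u W) (\<lambda>j. add_to_level (Q j) (Suc (lv j)) u)"
    unfolding level_extensions_def
  proof (intro conjI allI impI)
    fix j assume j: "j < k"
    show "level_partition (insert u W) E (add_to_level (Q j) (Suc (lv j)) u)"
      using level_partition_add_below[OF lp[OF j] lv[OF j] \<open>E w u\<close> \<open>u \<notin> W\<close>] .
    show "rooted (add_to_level (Q j) (Suc (lv j)) u) v"
      using rooted_add_below[OF rt[OF j] lv[OF j]] .
    have "u \<notin> VH"
      using \<open>VH \<subseteq> W\<close> \<open>u \<notin> W\<close> by blast
    then show "restricts_to (add_to_level (Q j) (Suc (lv j)) u) VH (P j)"
      using restricts_to_add_below[OF rs[OF j] lv[OF j]] by blast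
  next
    fix j j' assume jj': "j < k" "j' < k" "j \<noteq> j'"
    show "level_disjoint (add_to_level (Q j) (Suc (lv j)) u) (add_to_level (Q j') (Suc (lv j')) u)"
      using level_disjoint_add_below[OF ld[OF jj'] lv[OF jj'(1)] lv[OF jj'(2)] lv_inj[OF jj']
          u_new[OF jj'(1)] u_new[OF jj'(2)]] .
  qed
  then show ?thesis by blast
qed

lemma rtranclp_exit_edge:
  assumes "R\<^sup>*\<^sup>* x y" "x \<notin> W" "y \<in> W"
  shows "\<exists>a b. R a b \<and> a \<notin> W \<and> b \<in> W"
  using assms by (induction rule: converse_rtranclp_induct) blast+

lemma level_extensions_to_all:
  assumes "graph V E" "v \<in> VH"
    and reach: "\<forall>u\<in>V - {v}. \<exists>w\<in>VH - {v}. (del_edges E v)\<^sup>*\<^sup>* u w"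
    and "VH \<subseteq> W" "W \<subseteq> V" "level_extensions k E VH P v W Q"
  shows "\<exists>Q. level_extensions k E VH P v V Q"
  using assms(4-)
proof (induction "card (V - W)" arbitrary: W Q rule: less_induct)
  case less
  have fin: "finite V" and E_sym: "\<And>a b. E a b \<Longrightarrow> E b a" and E_in: "\<And>a b. E a b \<Longrightarrow> b \<in> V"
    using \<open>graph V E\<close> by (auto simp: graph_def)
  show ?case
  proof (cases "W = V")
    case True
    then show ?thesis using less.prems by blast
  next
    case False
    then obtain x where x: "x \<in> V - W"
      using less.prems by blast
    then have "x \<in> V - {v}"
      using \<open>v \<in> VH\<close> less.prems by blast
    then obtain y where "y \<in> VH - {v}" "(del_edges E v)\<^sup>*\<^sup>* x y"
      using reach by blast
    then obtain u w where "del_edges E v u w" "u \<notin> W" "w \<in> W"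
      using x less.prems rtranclp_exit_edge[of "del_edges E v" x y W] by blast
    then have "E w u" "w \<noteq> v" "u \<in> V - W"
      using E_sym E_in by (auto simp: del_edges_def)
    then obtain Q' where "level_extensions k E VH P v (insert u W) Q'"
      using level_extensions_insert[of k E VH P v W Q w u] less.prems \<open>w \<in> W\<close> by blast
    moreover have "card (V - insert u W) < card (V - W)"
      using fin \<open>u \<in> V - W\<close> by (intro psubset_card_mono) auto
    moreover have "VH \<subseteq> insert u W" "insert u W \<subseteq> V"
      using less.prems \<open>u \<in> V - W\<close> by auto
    ultimately show ?thesis
      using less.hyps by blast
  qed
qed

theorem lemma2:
  fixes V VH :: "'a set" and E EH :: "'a \<Rightarrow> 'a \<Rightarrow> bool" and v :: 'a
    and k :: nat and P :: "nat \<Rightarrow> 'a set list"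
  assumes "graph V E" and "connected_graph V E"
    and "v \<in> V"
    and "subgraph VH EH V E" and "v \<in> VH"
    and "\<forall>u\<in>V - {v}. \<exists>w\<in>VH - {v}. (del_edges E v)\<^sup>*\<^sup>* u w"
    and "\<forall>j<k. level_partition VH EH (P j) \<and> rooted (P j) v"
    and "\<forall>j<k. \<forall>j'<k. j \<noteq> j' \<longrightarrow> level_disjoint (P j) (P j')"
  shows "\<exists>Q :: nat \<Rightarrow> 'a set list.
           (\<forall>j<k. level_partition V E (Q j) \<and> rooted (Q j) v \<and> restricts_to (Q j) VH (P j))
         \<and> (\<forall>j<k. \<forall>j'<k. j \<noteq> j' \<longrightarrow> level_disjoint (Q j) (Q j'))"
proof -
  have "VH \<subseteq> V" and "\<And>x y. EH x y \<Longrightarrow> E x y"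
    using \<open>subgraph VH EH V E\<close> by (auto simp: subgraph_def)
  then have "level_extensions k E VH P v VH P"
    using assms(7,8) by (auto simp: level_extensions_def intro: level_partition_mono_edges restricts_to_self)
  then show ?thesis
    using level_extensions_to_all[OF assms(1,5,6)] \<open>VH \<subseteq> V\<close>
    unfolding level_extensions_def by blast
qed

end
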